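(* Let $\mathcal S$ be a trajectory set satisfying (LOP) and (K). Then $\mathcal L^1_{(K)}$ is a vector space containing $\mathcal E$, and $\int_{(K)}:\mathcal L^1_{(K)}\to\mathbb R$ is a linear, positive, constant-preserving extension of $I$ which satisfies: if $f,f_n\in\mathcal L^1_{(K)}$ and $\lim_{n\to\infty}\|f_n-f\|=0$, then $\lim_{n\to\infty}\int_{(K)}f_n=\int_{(K)}f$. Moreover, $\int_{(K)}$ is strictly positive: if $f,g\in\mathcal L^1_{(K)}$ satisfy $f\ge g$ almost everywhere and $\int_{(K)}f=\int_{(K)}g$, then $f=g$ almost everywhere.
   Context: Fix $s_0\in\mathbb R$. A trajectory set is any set $\mathcal S$ of real sequences $S=(S_j)_{j\in\mathbb N_0}$ with $S_0=s_0$. A simple portfolio $(V,n,H)$ consists of $V\in\mathbb R$, $n\in\mathbb N$ and nonanticipating functions $H_i:\mathcal S\to\mathbb R$, $0\le i\le n-1$ (i.e. $H_i(S)=h_i(S_0,\dots,S_i)$ for some arbitrary $h_i:\mathbb R^{i+1}\to\mathbb R$). Its wealth is $\Pi^{V,n,H}_j(S)=V+\sum_{i=0}^{\min\{j,n\}-1}H_i(S)(S_{i+1}-S_i)$ and $\Pi^{V,n,H}_\infty:=\Pi^{V,n,H}_n$; it is positive if $V\ge0$ and $\Pi^{V,n,H}_\infty\ge0$ on $\mathcal S$. A generalized portfolio is a sequence $(V_m,n_m,H_m)_{m\in\mathbb N_0}$ of simple portfolios, positive for every $m\ge1$; it is a positive generalized portfolio if moreover $\Pi^{V_0,n_0,H_0}_j\equiv0$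 for all $j$. A map $f:\mathcal S\to[-\infty,+\infty]$ is superhedged with initial endowment $V=\sum_{m=0}^\infty V_m\in(-\infty,+\infty]$ by such a portfolio if $f\le\sum_{m=0}^\infty\Pi^{V_m,n_m,H_m}_\infty$ on $\mathcal S$. For $f\ge0$, $\bar I(f)$ is the infimum of initial endowments of positive generalized portfolios superhedging $f$; $\bar\sigma(f)$ is the infimum of initial endowments of generalized portfolios superhedging $f$. Let $\mathcal E=\{\Pi^{V,n,H}_\infty\}$ over all simple portfolios. (LOP): whenever two simple portfolios have equal terminal wealth $\Pi_\infty$ at every $S\in\mathcal S$, their initial endowments coincide; under (LOP), $I:\mathcal E\to\mathbb R$, $I(\Pi^{V,n,H}_\infty)=V$, is well defined and linear. (K): $I(f)+\bar I(f^-)\le\bar I(f^+)$ for every $f\in\mathcal E$. Define $\|f\|:=\bar I(|f|)$; null functions are $f$ with $\|f\|=0$, null sets are $A\subseteq\mathcal S$ with $\|\mathbf 1_A\|=0$, and "almost everywhere" means outside a null set. Let $\underline\sigma(f)=-\bar\sigma(-f)$, let $\mathcal L^1_{(K)}$ be the set of real-valued financial positions $f$ with $\underline\sigma(f)=\bar\sigma(f)\in\mathbb R$, and set $\int_{(K)}f:=\bar\sigma(f)$ for $f\in\mathcal L^1_{(K)}$. Positive means $f\ge0$ implies $\int_{(K)}f\ge0$; constant-preserving means $\int_{(K)}c=c$ for constants $c$. *)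

theory Defs
  imports "HOL-Analysis.Analysis"
begin

type_synonym traj = "nat \<Rightarrow> real"

text \<open>A simple portfolio (V, n, H): initial endowment V, horizon n, strategies H i.\<close>
type_synonym portfolio = "real \<times> nat \<times> (nat \<Rightarrow> traj \<Rightarrow> real)"

definition trajectory_set :: "real \<Rightarrow> traj set \<Rightarrow> bool" where
  "trajectory_set s0 \<S> \<longleftrightarrow> (\<forall>S\<in>\<S>. S 0 = s0)"

definition pV :: "portfolio \<Rightarrow> real" where "pV p = fst p"
definition pn :: "portfolio \<Rightarrow> nat" where "pn p = fst (snd p)"
definition pH :: "portfolio \<Rightarrow> nat \<Rightarrow> traj \<Rightarrow> real" where "pH p = snd (snd p)"

definition nonanticipating :: "traj set \<Rightarrow> nat \<Rightarrow> (nat \<Rightarrow> traj \<Rightarrow> real) \<Rightarrow> bool" where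
  "nonanticipating \<S> n H \<longleftrightarrow>
     (\<forall>i<n. \<exists>h :: traj \<Rightarrow> real. \<forall>S\<in>\<S>. H i S = h (\<lambda>k. if k \<le> i then S k else 0))"

definition simple_portfolio :: "traj set \<Rightarrow> portfolio \<Rightarrow> bool" where
  "simple_portfolio \<S> p \<longleftrightarrow> pn p \<ge> 1 \<and> nonanticipating \<S> (pn p) (pH p)"

definition wealth :: "portfolio \<Rightarrow> nat \<Rightarrow> traj \<Rightarrow> real" where
  "wealth p j S = pV p + (\<Sum>i<min j (pn p). pH p i S * (S (Suc i) - S i))"

definition terminal :: "portfolio \<Rightarrow> traj \<Rightarrow> real" where
  "terminal p S = wealth p (pn p) S"

definition positive_portfolio :: "traj set \<Rightarrow> portfolio \<Rightarrow> bool" where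
  "positive_portfolio \<S> p \<longleftrightarrow> pV p \<ge> 0 \<and> (\<forall>S\<in>\<S>. terminal p S \<ge> 0)"

definition gen_portfolio :: "traj set \<Rightarrow> (nat \<Rightarrow> portfolio) \<Rightarrow> bool" where
  "gen_portfolio \<S> P \<longleftrightarrow> (\<forall>m. simple_portfolio \<S> (P m)) \<and>
     (\<forall>m\<ge>1. positive_portfolio \<S> (P m))"

definition pos_gen_portfolio :: "traj set \<Rightarrow> (nat \<Rightarrow> portfolio) \<Rightarrow> bool" where
  "pos_gen_portfolio \<S> P \<longleftrightarrow> gen_portfolio \<S> P \<and> (\<forall>j. \<forall>S\<in>\<S>. wealth (P 0) j S = 0)"

text \<open>Initial endowment V = sum of V_m in (-inf, +inf] (terms m >= 1 are nonnegative).\<close>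
definition endowment :: "(nat \<Rightarrow> portfolio) \<Rightarrow> ereal" where
  "endowment P = ereal (pV (P 0)) + (\<Sum>m. ereal (pV (P (Suc m))))"

definition gen_terminal :: "(nat \<Rightarrow> portfolio) \<Rightarrow> traj \<Rightarrow> ereal" where
  "gen_terminal P S = ereal (terminal (P 0) S) + (\<Sum>m. ereal (terminal (P (Suc m)) S))"

definition superhedges :: "traj set \<Rightarrow> (traj \<Rightarrow> ereal) \<Rightarrow> (nat \<Rightarrow> portfolio) \<Rightarrow> bool" where
  "superhedges \<S> f P \<longleftrightarrow> (\<forall>S\<in>\<S>. f S \<le> gen_terminal P S)"

definition Ibar :: "traj set \<Rightarrow> (traj \<Rightarrow> ereal) \<Rightarrow> ereal" where
  "Ibar \<S> f = Inf {endowment P | P. pos_gen_portfolio \<S> P \<and> superhedges \<S> f P}"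

definition sigmabar :: "traj set \<Rightarrow> (traj \<Rightarrow> ereal) \<Rightarrow> ereal" where
  "sigmabar \<S> f = Inf {endowment P | P. gen_portfolio \<S> P \<and> superhedges \<S> f P}"

definition sigmaunder :: "traj set \<Rightarrow> (traj \<Rightarrow> ereal) \<Rightarrow> ereal" where
  "sigmaunder \<S> f = - sigmabar \<S> (\<lambda>S. - f S)"

definition in_E :: "traj set \<Rightarrow> (traj \<Rightarrow> real) \<Rightarrow> bool" where
  "in_E \<S> f \<longleftrightarrow> (\<exists>p. simple_portfolio \<S> p \<and> (\<forall>S\<in>\<S>. f S = terminal p S))"

definition LOP :: "traj set \<Rightarrow> bool" where
  "LOP \<S> \<longleftrightarrow> (\<forall>p q. simple_portfolio \<S> p \<and> simple_portfolio \<S> q \<and>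
      (\<forall>S\<in>\<S>. terminal p S = terminal q S) \<longrightarrow> pV p = pV q)"

definition Ifun :: "traj set \<Rightarrow> (traj \<Rightarrow> real) \<Rightarrow> real" where
  "Ifun \<S> f = (THE v. \<exists>p. simple_portfolio \<S> p \<and> (\<forall>S\<in>\<S>. f S = terminal p S) \<and> pV p = v)"

definition condK :: "traj set \<Rightarrow> bool" where
  "condK \<S> \<longleftrightarrow> (\<forall>f. in_E \<S> f \<longrightarrow>
     ereal (Ifun \<S> f) + Ibar \<S> (\<lambda>S. ereal (max (- f S) 0)) \<le> Ibar \<S> (\<lambda>S. ereal (max (f S) 0)))"

definition snorm :: "traj set \<Rightarrow> (traj \<Rightarrow> real) \<Rightarrow> ereal" where
  "snorm \<S> f = Ibar \<S> (\<lambda>S. ereal \<bar>f S\<bar>)"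

definition null_set :: "traj set \<Rightarrow> traj set \<Rightarrow> bool" where
  "null_set \<S> A \<longleftrightarrow> A \<subseteq> \<S> \<and> Ibar \<S> (\<lambda>S. ereal (indicator A S)) = 0"

definition ae :: "traj set \<Rightarrow> (traj \<Rightarrow> bool) \<Rightarrow> bool" where
  "ae \<S> P \<longleftrightarrow> (\<exists>A. null_set \<S> A \<and> (\<forall>S\<in>\<S> - A. P S))"

definition L1K :: "traj set \<Rightarrow> (traj \<Rightarrow> real) set" where
  "L1K \<S> = {f. sigmaunder \<S> (\<lambda>S. ereal (f S)) = sigmabar \<S> (\<lambda>S. ereal (f S))
               \<and> sigmabar \<S> (\<lambda>S. ereal (f S)) \<noteq> \<infinity> \<and> sigmabar \<S> (\<lambda>S. ereal (f S)) \<noteq> -\<infinity>}"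

definition intK :: "traj set \<Rightarrow> (traj \<Rightarrow> real) \<Rightarrow> real" where
  "intK \<S> f = real_of_ereal (sigmabar \<S> (\<lambda>S. ereal (f S)))"

end

theory Submission
  imports Defs
begin

text \<open>The upper prices \<open>sigmabar\<close> and \<open>Ibar\<close> are infima of endowments of (positive) generalized
  portfolios, so they are monotone, subadditive and positively homogeneous, and \<open>Ibar\<close> is even
  countably subadditive. Condition (K), applied to simple portfolios, shows that no generalized
  portfolio superhedges a simple one more cheaply, so \<open>sigmabar\<close> agrees with \<open>I\<close> on \<open>E\<close>, and
  that the nonnegative terminal wealth of a generalized portfolio can be superhedged positively
  at no extra cost. Linearity of the integral then follows from subadditivity squeezed by
  \<open>sigmabar 0 = 0\<close>, continuity from \<open>sigmabar \<le> Ibar\<close>, and strict positivity from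
  \<open>Ibar (h\<^sup>+) \<le> sigmabar h\<close> for \<open>h \<ge> 0\<close> almost everywhere, followed by countable
  subadditivity.\<close>

section \<open>Portfolio algebra\<close>

definition const_portfolio :: "real \<Rightarrow> portfolio" where
  "const_portfolio c = (c, 1, \<lambda>i S. 0)"

text \<open>Each strategy is cut off at its own horizon, since beyond it the strategy is arbitrary.\<close>
definition add_portfolio :: "portfolio \<Rightarrow> portfolio \<Rightarrow> portfolio" where
  "add_portfolio p q = (pV p + pV q, max (pn p) (pn q),
     \<lambda>i S. (if i < pn p then pH p i S else 0) + (if i < pn q then pH q i S else 0))"

definition scale_portfolio :: "real \<Rightarrow> portfolio \<Rightarrow> portfolio" where
  "scale_portfolio c p = (c * pV p, pn p, \<lambda>i S. c * pH p i S)"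

lemma const_portfolio_simps [simp]:
  "pV (const_portfolio c) = c" "pn (const_portfolio c) = 1" "pH (const_portfolio c) = (\<lambda>i S. 0)"
  by (simp_all add: const_portfolio_def pV_def pn_def pH_def)

lemma add_portfolio_simps [simp]:
  "pV (add_portfolio p q) = pV p + pV q"
  "pn (add_portfolio p q) = max (pn p) (pn q)"
  "pH (add_portfolio p q) =
     (\<lambda>i S. (if i < pn p then pH p i S else 0) + (if i < pn q then pH q i S else 0))"
  by (simp_all add: add_portfolio_def pV_def pn_def pH_def)

lemma scale_portfolio_simps [simp]:
  "pV (scale_portfolio c p) = c * pV p" "pn (scale_portfolio c p) = pn p"
  "pH (scale_portfolio c p) = (\<lambda>i S. c * pH p i S)"
  by (simp_all add: scale_portfolio_def pV_def pn_def pH_def)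

lemma sum_lessThan_cutoff:
  "(\<Sum>i<(k::nat). (if i < n then a i else 0) * b i) = (\<Sum>i<min k n. a i * (b i :: real))"
  by (induct k) (auto simp: min_def not_less_eq_eq)

lemma wealth_eq_terminal: "pn p \<le> j \<Longrightarrow> wealth p j S = terminal p S"
  by (simp add: wealth_def terminal_def min_def)

lemma wealth_const_portfolio [simp]: "wealth (const_portfolio c) j S = c"
  by (simp add: wealth_def)

lemma terminal_const_portfolio [simp]: "terminal (const_portfolio c) S = c"
  by (simp add: terminal_def)

lemma wealth_add_portfolio: "wealth (add_portfolio p q) j S = wealth p j S + wealth q j S"
proof -
  let ?m = "min j (max (pn p) (pn q))" and ?d = "\<lambda>i. S (Suc i) - S i"
  have "wealth (add_portfolio p q) j S = pV p + pV q
      + (\<Sum>i<?m. (if i < pn p then pH p i S else 0) * ?d i)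
      + (\<Sum>i<?m. (if i < pn q then pH q i S else 0) * ?d i)"
    by (simp add: wealth_def distrib_right sum.distrib)
  also have "\<dots> = pV p + pV q + (\<Sum>i<min ?m (pn p). pH p i S * ?d i)
      + (\<Sum>i<min ?m (pn q). pH q i S * ?d i)"
    by (simp only: sum_lessThan_cutoff)
  also have "\<dots> = wealth p j S + wealth q j S"
    unfolding wealth_def by (simp add: min_def max_def)
  finally show ?thesis .
qed

lemma terminal_add_portfolio: "terminal (add_portfolio p q) S = terminal p S + terminal q S"
  unfolding terminal_def[of "add_portfolio p q"] by (simp add: wealth_add_portfolio wealth_eq_terminal)

lemma wealth_scale_portfolio: "wealth (scale_portfolio c p) j S = c * wealth p j S"
  by (simp add: wealth_def sum_distrib_left algebra_simps)

lemma terminal_scale_portfolio: "terminal (scale_portfolio c p) S = c * terminal p S"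
  by (simp add: terminal_def wealth_scale_portfolio)

lemma nonanticipating_iff:
  "nonanticipating \<S> n H \<longleftrightarrow>
     (\<forall>i<n. \<forall>S\<in>\<S>. \<forall>S'\<in>\<S>. (\<forall>k\<le>i. S k = S' k) \<longrightarrow> H i S = H i S')"
proof
  assume H: "nonanticipating \<S> n H"
  show "\<forall>i<n. \<forall>S\<in>\<S>. \<forall>S'\<in>\<S>. (\<forall>k\<le>i. S k = S' k) \<longrightarrow> H i S = H i S'"
  proof (intro allI impI ballI)
    fix i S S' assume "i < n" "S \<in> \<S>" "S' \<in> \<S>" "\<forall>k\<le>i. S k = S' k"
    moreover obtain h where "\<forall>S\<in>\<S>. H i S = h (\<lambda>k. if k \<le> i then S k else 0)"
      using H \<open>i < n\<close> unfolding nonanticipating_def by blast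
    moreover have "(\<lambda>k. if k \<le> i then S k else 0) = (\<lambda>k. if k \<le> i then S' k else 0)"
      using \<open>\<forall>k\<le>i. S k = S' k\<close> by auto
    ultimately show "H i S = H i S'" by simp
  qed
next
  assume agree: "\<forall>i<n. \<forall>S\<in>\<S>. \<forall>S'\<in>\<S>. (\<forall>k\<le>i. S k = S' k) \<longrightarrow> H i S = H i S'"
  show "nonanticipating \<S> n H"
    unfolding nonanticipating_def
  proof (intro allI impI)
    fix i assume "i < n"
    let ?past = "\<lambda>S k. if k \<le> i then S k else 0"
    define h where "h x = H i (SOME S'. S' \<in> \<S> \<and> ?past S' = x)" for x
    have "H i S = h (?past S)" if "S \<in> \<S>" for S
    proof -
      define S0 where "S0 = (SOME S'. S' \<in> \<S> \<and> ?past S' = ?past S)"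
      have "\<exists>S'. S' \<in> \<S> \<and> ?past S' = ?past S" using that by blast
      then have S0: "S0 \<in> \<S> \<and> ?past S0 = ?past S"
        unfolding S0_def by (rule someI_ex)
      have "S k = S0 k" if "k \<le> i" for k
        using fun_cong[OF conjunct2[OF S0], of k] that by simp
      then have "H i S = H i S0"
        using agree \<open>i < n\<close> \<open>S \<in> \<S>\<close> S0 by blast
      then show ?thesis by (simp add: h_def S0_def)
    qed
    then show "\<exists>h. \<forall>S\<in>\<S>. H i S = h (?past S)" by blast
  qed
qed

lemma simple_const_portfolio: "simple_portfolio \<S> (const_portfolio c)"
  by (simp add: simple_portfolio_def nonanticipating_iff)

lemma simple_add_portfolio:
  assumes "simple_portfolio \<S> p" and "simple_portfolio \<S> q"
  shows "simple_portfolio \<S> (add_portfolio p q)"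
proof -
  have p: "1 \<le> pn p" "\<forall>i<pn p. \<forall>S\<in>\<S>. \<forall>S'\<in>\<S>. (\<forall>k\<le>i. S k = S' k) \<longrightarrow> pH p i S = pH p i S'"
    and q: "\<forall>i<pn q. \<forall>S\<in>\<S>. \<forall>S'\<in>\<S>. (\<forall>k\<le>i. S k = S' k) \<longrightarrow> pH q i S = pH q i S'"
    using assms unfolding simple_portfolio_def nonanticipating_iff by blast+
  show ?thesis
    unfolding simple_portfolio_def nonanticipating_iff
  proof (intro conjI allI impI ballI)
    show "1 \<le> pn (add_portfolio p q)" using p(1) by (simp add: le_max_iff_disj)
  next
    fix i S S' assume "i < pn (add_portfolio p q)" "S \<in> \<S>" "S' \<in> \<S>" "\<forall>k\<le>i. S k = S' k"
    then have "i < pn p \<longrightarrow> pH p i S = pH p i S'" "i < pn q \<longrightarrow> pH q i S = pH q i S'"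
      using p(2) q by blast+
    then show "pH (add_portfolio p q) i S = pH (add_portfolio p q) i S'" by simp
  qed
qed

lemma simple_scale_portfolio:
  assumes "simple_portfolio \<S> p"
  shows "simple_portfolio \<S> (scale_portfolio c p)"
proof -
  have p: "1 \<le> pn p" "\<forall>i<pn p. \<forall>S\<in>\<S>. \<forall>S'\<in>\<S>. (\<forall>k\<le>i. S k = S' k) \<longrightarrow> pH p i S = pH p i S'"
    using assms unfolding simple_portfolio_def nonanticipating_iff by blast+
  show ?thesis
    unfolding simple_portfolio_def nonanticipating_iff
  proof (intro conjI allI impI ballI)
    show "1 \<le> pn (scale_portfolio c p)" using p(1) by simp
  next
    fix i S S' assume "i < pn (scale_portfolio c p)" "S \<in> \<S>" "S' \<in> \<S>" "\<forall>k\<le>i. S k = S' k"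
    moreover have "i < pn p" using \<open>i < pn (scale_portfolio c p)\<close> by simp
    ultimately have "pH p i S = pH p i S'" using p(2) by blast
    then show "pH (scale_portfolio c p) i S = pH (scale_portfolio c p) i S'" by simp
  qed
qed

lemma positive_const_portfolio: "0 \<le> c \<Longrightarrow> positive_portfolio \<S> (const_portfolio c)"
  by (simp add: positive_portfolio_def)

lemma positive_add_portfolio:
  "positive_portfolio \<S> p \<Longrightarrow> positive_portfolio \<S> q \<Longrightarrow> positive_portfolio \<S> (add_portfolio p q)"
  by (simp add: positive_portfolio_def terminal_add_portfolio)

lemma positive_scale_portfolio:
  "0 \<le> c \<Longrightarrow> positive_portfolio \<S> p \<Longrightarrow> positive_portfolio \<S> (scale_portfolio c p)"
  by (simp add: positive_portfolio_def terminal_scale_portfolio)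

lemma LOP_nonempty: "LOP \<S> \<Longrightarrow> \<S> \<noteq> {}"
  using simple_const_portfolio[of \<S> 0] simple_const_portfolio[of \<S> 1]
  unfolding LOP_def by (metis const_portfolio_simps(1) empty_iff zero_neq_one)

lemma Ifun_terminal:
  assumes "LOP \<S>" and "simple_portfolio \<S> p" and "\<And>S. S \<in> \<S> \<Longrightarrow> f S = terminal p S"
  shows "Ifun \<S> f = pV p"
  unfolding Ifun_def
proof (rule the_equality)
  show "\<exists>p'. simple_portfolio \<S> p' \<and> (\<forall>S\<in>\<S>. f S = terminal p' S) \<and> pV p' = pV p"
    using assms by blast
next
  fix v assume "\<exists>p'. simple_portfolio \<S> p' \<and> (\<forall>S\<in>\<S>. f S = terminal p' S) \<and> pV p' = v"
  then show "v = pV p" using assms unfolding LOP_def by metis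
qed

section \<open>Generalized portfolios\<close>

definition gen_add :: "(nat \<Rightarrow> portfolio) \<Rightarrow> (nat \<Rightarrow> portfolio) \<Rightarrow> nat \<Rightarrow> portfolio" where
  "gen_add P Q m = add_portfolio (P m) (Q m)"

definition gen_scale :: "real \<Rightarrow> (nat \<Rightarrow> portfolio) \<Rightarrow> nat \<Rightarrow> portfolio" where
  "gen_scale c P m = scale_portfolio c (P m)"

definition gen_single :: "portfolio \<Rightarrow> nat \<Rightarrow> portfolio" where
  "gen_single p m = (if m = 0 then p else const_portfolio 0)"

definition gen_tail :: "(nat \<Rightarrow> portfolio) \<Rightarrow> nat \<Rightarrow> nat \<Rightarrow> portfolio" where
  "gen_tail P N m = (if m = 0 then const_portfolio 0 else P (m + N))"

primrec gen_partial_sum :: "(nat \<Rightarrow> portfolio) \<Rightarrow> nat \<Rightarrow> portfolio" where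
  "gen_partial_sum P 0 = P 0"
| "gen_partial_sum P (Suc n) = add_portfolio (gen_partial_sum P n) (P (Suc n))"

lemma gen_portfolio_simple: "gen_portfolio \<S> P \<Longrightarrow> simple_portfolio \<S> (P m)"
  by (simp add: gen_portfolio_def)

lemma gen_portfolio_pV_nonneg: "gen_portfolio \<S> P \<Longrightarrow> 0 \<le> pV (P (Suc m))"
  by (simp add: gen_portfolio_def positive_portfolio_def)

lemma gen_portfolio_terminal_nonneg:
  "gen_portfolio \<S> P \<Longrightarrow> S \<in> \<S> \<Longrightarrow> 0 \<le> terminal (P (Suc m)) S"
  by (simp add: gen_portfolio_def positive_portfolio_def)

lemma pos_gen_portfolio_gen: "pos_gen_portfolio \<S> P \<Longrightarrow> gen_portfolio \<S> P"
  by (simp add: pos_gen_portfolio_def)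

lemma pos_gen_portfolioI:
  "gen_portfolio \<S> P \<Longrightarrow> P 0 = const_portfolio 0 \<Longrightarrow> pos_gen_portfolio \<S> P"
  by (simp add: pos_gen_portfolio_def)

lemma endowment_nonneg_tail: "gen_portfolio \<S> P \<Longrightarrow> 0 \<le> (\<Sum>m. ereal (pV (P (Suc m))))"
  by (simp add: suminf_0_le gen_portfolio_pV_nonneg)

lemma gen_terminal_nonneg_tail:
  "gen_portfolio \<S> P \<Longrightarrow> S \<in> \<S> \<Longrightarrow> 0 \<le> (\<Sum>m. ereal (terminal (P (Suc m)) S))"
  by (simp add: suminf_0_le gen_portfolio_terminal_nonneg)

lemma gen_terminal_not_MInf: "gen_portfolio \<S> P \<Longrightarrow> S \<in> \<S> \<Longrightarrow> gen_terminal P S \<noteq> -\<infinity>"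
  using gen_terminal_nonneg_tail by (fastforce simp: gen_terminal_def)

text \<open>Under (LOP) the trajectory set is nonempty, so the vanishing wealth of the
  first component forces its initial endowment to be 0.\<close>
lemma endowment_pos_gen:
  assumes "LOP \<S>" and "pos_gen_portfolio \<S> P"
  shows "endowment P = (\<Sum>m. ereal (pV (P (Suc m))))"
proof -
  obtain S where "S \<in> \<S>" using LOP_nonempty[OF assms(1)] by blast
  then have "wealth (P 0) 0 S = 0" using assms(2) by (simp add: pos_gen_portfolio_def)
  then have "pV (P 0) = 0" by (simp add: wealth_def)
  then show ?thesis by (simp add: endowment_def zero_ereal_def[symmetric])
qed

lemma gen_terminal_pos_gen:
  assumes "pos_gen_portfolio \<S> P" and "S \<in> \<S>"
  shows "gen_terminal P S = (\<Sum>m. ereal (terminal (P (Suc m)) S))"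
proof -
  have "terminal (P 0) S = 0"
    using assms unfolding terminal_def pos_gen_portfolio_def by blast
  then show ?thesis by (simp add: gen_terminal_def zero_ereal_def[symmetric])
qed

lemma endowment_pos_gen_nonneg: "LOP \<S> \<Longrightarrow> pos_gen_portfolio \<S> P \<Longrightarrow> 0 \<le> endowment P"
  using endowment_pos_gen endowment_nonneg_tail pos_gen_portfolio_gen by metis

lemma gen_terminal_pos_gen_nonneg:
  "pos_gen_portfolio \<S> P \<Longrightarrow> S \<in> \<S> \<Longrightarrow> 0 \<le> gen_terminal P S"
  using gen_terminal_pos_gen gen_terminal_nonneg_tail pos_gen_portfolio_gen by metis

lemma ereal_head_suminf_add:
  assumes "\<And>m. 0 \<le> x m" and "\<And>m. 0 \<le> y m"
  shows "ereal (a + b) + (\<Sum>m. ereal (x m + y m)) =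
         (ereal a + (\<Sum>m. ereal (x m))) + (ereal b + (\<Sum>m. ereal (y m)))"
proof -
  have "(\<Sum>m. ereal (x m + y m)) = (\<Sum>m. ereal (x m)) + (\<Sum>m. ereal (y m))"
    using suminf_add_ereal[of "\<lambda>m. ereal (x m)" "\<lambda>m. ereal (y m)"] assms by simp
  then show ?thesis
    by (cases "\<Sum>m. ereal (x m)"; cases "\<Sum>m. ereal (y m)") (simp_all add: ac_simps)
qed

lemma ereal_head_suminf_cmult:
  assumes "0 \<le> c" and "\<And>m. 0 \<le> x m"
  shows "ereal (c * a) + (\<Sum>m. ereal (c * x m)) = ereal c * (ereal a + (\<Sum>m. ereal (x m)))"
proof -
  have "(\<Sum>m. ereal (c * x m)) = ereal c * (\<Sum>m. ereal (x m))"
    using suminf_cmult_ereal[of "\<lambda>m. ereal (x m)" "ereal c"] assms by simp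
  then show ?thesis
    using assms(1) by (cases "\<Sum>m. ereal (x m)") (auto simp: distrib_left)
qed

lemma gen_add_portfolio:
  "gen_portfolio \<S> P \<Longrightarrow> gen_portfolio \<S> Q \<Longrightarrow> gen_portfolio \<S> (gen_add P Q)"
  by (simp add: gen_portfolio_def gen_add_def simple_add_portfolio positive_add_portfolio)

lemma gen_add_pos_gen_portfolio:
  "pos_gen_portfolio \<S> P \<Longrightarrow> pos_gen_portfolio \<S> Q \<Longrightarrow> pos_gen_portfolio \<S> (gen_add P Q)"
  by (simp add: pos_gen_portfolio_def gen_add_portfolio) (simp add: gen_add_def wealth_add_portfolio)

lemma endowment_gen_add:
  "gen_portfolio \<S> P \<Longrightarrow> gen_portfolio \<S> Q \<Longrightarrow>
   endowment (gen_add P Q) = endowment P + endowment Q"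
  unfolding endowment_def gen_add_def add_portfolio_simps
  by (rule ereal_head_suminf_add) (simp_all add: gen_portfolio_pV_nonneg)

lemma gen_terminal_gen_add:
  "gen_portfolio \<S> P \<Longrightarrow> gen_portfolio \<S> Q \<Longrightarrow> S \<in> \<S> \<Longrightarrow>
   gen_terminal (gen_add P Q) S = gen_terminal P S + gen_terminal Q S"
  unfolding gen_terminal_def gen_add_def terminal_add_portfolio
  by (rule ereal_head_suminf_add) (simp_all add: gen_portfolio_terminal_nonneg)

lemma gen_scale_portfolio: "0 \<le> c \<Longrightarrow> gen_portfolio \<S> P \<Longrightarrow> gen_portfolio \<S> (gen_scale c P)"
  by (simp add: gen_portfolio_def gen_scale_def simple_scale_portfolio positive_scale_portfolio)

lemma endowment_gen_scale:
  "0 \<le> c \<Longrightarrow> gen_portfolio \<S> P \<Longrightarrow> endowment (gen_scale c P) = ereal c * endowment P"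
  unfolding endowment_def gen_scale_def scale_portfolio_simps
  by (rule ereal_head_suminf_cmult) (simp_all add: gen_portfolio_pV_nonneg)

lemma gen_terminal_gen_scale:
  "0 \<le> c \<Longrightarrow> gen_portfolio \<S> P \<Longrightarrow> S \<in> \<S> \<Longrightarrow>
   gen_terminal (gen_scale c P) S = ereal c * gen_terminal P S"
  unfolding gen_terminal_def gen_scale_def terminal_scale_portfolio
  by (rule ereal_head_suminf_cmult) (simp_all add: gen_portfolio_terminal_nonneg)

lemma gen_single_portfolio: "simple_portfolio \<S> p \<Longrightarrow> gen_portfolio \<S> (gen_single p)"
  by (simp add: gen_portfolio_def gen_single_def simple_const_portfolio positive_const_portfolio)

lemma endowment_gen_single: "endowment (gen_single p) = pV p"
  by (simp add: endowment_def gen_single_def zero_ereal_def[symmetric])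

lemma gen_terminal_gen_single: "gen_terminal (gen_single p) S = terminal p S"
  by (simp add: gen_terminal_def gen_single_def zero_ereal_def[symmetric])

lemma gen_tail_pos_gen_portfolio: "gen_portfolio \<S> P \<Longrightarrow> pos_gen_portfolio \<S> (gen_tail P N)"
  by (rule pos_gen_portfolioI)
     (auto simp: gen_portfolio_def gen_tail_def simple_const_portfolio positive_const_portfolio)

lemma endowment_gen_tail: "endowment (gen_tail P N) = (\<Sum>m. ereal (pV (P (Suc (m + N)))))"
  by (simp add: endowment_def gen_tail_def)

lemma gen_terminal_gen_tail:
  "gen_terminal (gen_tail P N) S = (\<Sum>m. ereal (terminal (P (Suc (m + N))) S))"
  by (simp add: gen_terminal_def gen_tail_def)

lemma simple_gen_partial_sum: "gen_portfolio \<S> P \<Longrightarrow> simple_portfolio \<S> (gen_partial_sum P n)"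
  by (induct n) (simp_all add: simple_add_portfolio gen_portfolio_simple)

lemma pV_gen_partial_sum: "pV (gen_partial_sum P n) = pV (P 0) + (\<Sum>m<n. pV (P (Suc m)))"
  by (induct n) simp_all

lemma terminal_gen_partial_sum:
  "terminal (gen_partial_sum P n) S = terminal (P 0) S + (\<Sum>m<n. terminal (P (Suc m)) S)"
  by (induct n) (simp_all add: terminal_add_portfolio)

lemma suminf_ereal_offset:
  fixes f :: "nat \<Rightarrow> ereal"
  assumes "\<And>i. 0 \<le> f i"
  shows "suminf f = (\<Sum>j<n. f j) + (\<Sum>j. f (j + n))"
proof -
  define g where "g i = e2ennreal (f i)" for i
  have f: "f i = enn2ereal (g i)" for i
    using assms by (simp add: g_def enn2ereal_e2ennreal)
  have "suminf g = (\<Sum>j<n. g j) + (\<Sum>j. g (j + n))"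
    by (subst suminf_offset[of g n]) (simp_all add: add.commute)
  then show ?thesis
    unfolding f suminf_enn2ereal by (simp flip: plus_ennreal.rep_eq)
qed

lemma gen_terminal_split:
  assumes "gen_portfolio \<S> P" and "S \<in> \<S>"
  shows "gen_terminal P S = ereal (terminal (gen_partial_sum P N) S) + gen_terminal (gen_tail P N) S"
  using suminf_ereal_offset[of "\<lambda>m. ereal (terminal (P (Suc m)) S)" N]
    gen_portfolio_terminal_nonneg[OF assms]
  by (simp add: gen_terminal_def[of P] gen_terminal_gen_tail terminal_gen_partial_sum
      add.assoc[symmetric])

lemma endowment_split:
  assumes "gen_portfolio \<S> P"
  shows "endowment P = ereal (pV (gen_partial_sum P N)) + endowment (gen_tail P N)"
  using suminf_ereal_offset[of "\<lambda>m. ereal (pV (P (Suc m)))" N] gen_portfolio_pV_nonneg[OF assms]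
  by (simp add: endowment_def[of P] endowment_gen_tail pV_gen_partial_sum add.assoc[symmetric])

lemma endowment_gen_tail_small:
  assumes "gen_portfolio \<S> P" and "endowment P \<noteq> \<infinity>" and "0 < e"
  obtains N where "endowment (gen_tail P N) < ereal e"
proof -
  define V where "V m = pV (P (Suc m))" for m
  have V: "0 \<le> V m" for m
    using gen_portfolio_pV_nonneg[OF assms(1)] by (simp add: V_def)
  have "summable V"
    using assms(2) V by (intro summable_ereal) (auto simp: endowment_def V_def)
  then obtain N where "norm (\<Sum>i. V (i + N)) < e"
    using suminf_exist_split[OF assms(3)] by blast
  moreover have "endowment (gen_tail P N) = ereal (\<Sum>i. V (i + N))"
    using suminf_ereal'[OF summable_ignore_initial_segment[OF \<open>summable V\<close>, of N]]
    by (simp add: endowment_gen_tail V_def)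
  ultimately show ?thesis by (intro that[of N]) simp
qed

section \<open>Superhedging prices\<close>

lemma ereal_add_less_shift:
  fixes x y z :: ereal
  assumes "x + y < z" and "y \<noteq> \<infinity>"
  shows "\<exists>x'>x. x' + y < z"
proof (cases y)
  case (real r)
  then have "x < z - y" using assms by (cases x; cases z) auto
  then obtain x' where "x < x'" "x' < z - y" using dense by blast
  then show ?thesis using real by (intro exI[of _ x']) (cases x'; cases z; auto)
next
  case MInf
  have "x < \<infinity>" using assms by auto
  then obtain x' where "x < x'" "x' < \<infinity>" using dense by blast
  moreover have "-\<infinity> < z" using assms by auto
  ultimately show ?thesis using MInf by (intro exI[of _ x']) (cases x'; auto)
qed (use assms in simp)

lemma ereal_le_Inf_add:
  fixes A B :: "ereal set"
  assumes "\<And>a b. a \<in> A \<Longrightarrow> b \<in> B \<Longrightarrow> z \<le> a + b"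
  shows "z \<le> Inf A + Inf B"
proof (rule ccontr)
  assume "\<not> z \<le> Inf A + Inf B"
  then have lt: "Inf A + Inf B < z" by simp
  then have "Inf B \<noteq> \<infinity>" by auto
  with lt obtain a' where "Inf A < a'" "a' + Inf B < z"
    using ereal_add_less_shift by blast
  then have "Inf B + a' < z" "a' \<noteq> \<infinity>" by (auto simp: add.commute)
  then obtain b' where "Inf B < b'" "b' + a' < z"
    using ereal_add_less_shift by blast
  then obtain a b where "a \<in> A" "b \<in> B" "a < a'" "b < b'"
    using \<open>Inf A < a'\<close> by (auto simp: Inf_less_iff)
  then have "a + b < z" using \<open>b' + a' < z\<close> by (metis add_mono add.commute le_less_trans less_imp_le)
  then show False using assms \<open>a \<in> A\<close> \<open>b \<in> B\<close> by (simp add: not_le[symmetric])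
qed

definition hedging_price ::
    "((nat \<Rightarrow> portfolio) \<Rightarrow> bool) \<Rightarrow> traj set \<Rightarrow> (traj \<Rightarrow> ereal) \<Rightarrow> ereal" where
  "hedging_price adm \<S> f = Inf {endowment P | P. adm P \<and> superhedges \<S> f P}"

lemma sigmabar_eq_hedging_price: "sigmabar \<S> = hedging_price (gen_portfolio \<S>) \<S>"
  by (simp add: fun_eq_iff sigmabar_def hedging_price_def)

lemma Ibar_eq_hedging_price: "Ibar \<S> = hedging_price (pos_gen_portfolio \<S>) \<S>"
  by (simp add: fun_eq_iff Ibar_def hedging_price_def)

lemma hedging_price_le:
  "adm P \<Longrightarrow> superhedges \<S> f P \<Longrightarrow> hedging_price adm \<S> f \<le> endowment P"
  unfolding hedging_price_def by (rule Inf_lower) blast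

lemma hedging_price_greatest:
  "(\<And>P. adm P \<Longrightarrow> superhedges \<S> f P \<Longrightarrow> z \<le> endowment P) \<Longrightarrow> z \<le> hedging_price adm \<S> f"
  unfolding hedging_price_def by (rule Inf_greatest) blast

lemma hedging_price_less_iff:
  "hedging_price adm \<S> f < z \<longleftrightarrow> (\<exists>P. adm P \<and> superhedges \<S> f P \<and> endowment P < z)"
  unfolding hedging_price_def Inf_less_iff by blast

lemma hedging_price_mono:
  "(\<And>S. S \<in> \<S> \<Longrightarrow> f S \<le> g S) \<Longrightarrow> hedging_price adm \<S> f \<le> hedging_price adm \<S> g"
  unfolding hedging_price_def superhedges_def
  by (rule Inf_superset_mono) (auto intro: order_trans)

lemma hedging_price_add:
  assumes "\<And>P Q. adm P \<Longrightarrow> adm Q \<Longrightarrow> adm (gen_add P Q)"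
    and "\<And>P. adm P \<Longrightarrow> gen_portfolio \<S> P"
  shows "hedging_price adm \<S> (\<lambda>S. f S + g S) \<le> hedging_price adm \<S> f + hedging_price adm \<S> g"
  unfolding hedging_price_def[of adm \<S> f] hedging_price_def[of adm \<S> g]
proof (rule ereal_le_Inf_add, clarify)
  fix P Q assume P: "adm P" "superhedges \<S> f P" and Q: "adm Q" "superhedges \<S> g Q"
  have "superhedges \<S> (\<lambda>S. f S + g S) (gen_add P Q)"
    using P Q assms(2)[OF P(1)] assms(2)[OF Q(1)]
    by (auto simp: superhedges_def gen_terminal_gen_add intro: add_mono)
  then have "hedging_price adm \<S> (\<lambda>S. f S + g S) \<le> endowment (gen_add P Q)"
    by (rule hedging_price_le[where adm = adm, OF assms(1)[OF P(1) Q(1)]])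
  then show "hedging_price adm \<S> (\<lambda>S. f S + g S) \<le> endowment P + endowment Q"
    using endowment_gen_add assms(2) P(1) Q(1) by metis
qed

lemma sigmabar_le: "gen_portfolio \<S> P \<Longrightarrow> superhedges \<S> f P \<Longrightarrow> sigmabar \<S> f \<le> endowment P"
  unfolding sigmabar_eq_hedging_price by (rule hedging_price_le)

lemma Ibar_le: "pos_gen_portfolio \<S> P \<Longrightarrow> superhedges \<S> f P \<Longrightarrow> Ibar \<S> f \<le> endowment P"
  unfolding Ibar_eq_hedging_price by (rule hedging_price_le)

lemma sigmabar_mono: "(\<And>S. S \<in> \<S> \<Longrightarrow> f S \<le> g S) \<Longrightarrow> sigmabar \<S> f \<le> sigmabar \<S> g"
  unfolding sigmabar_eq_hedging_price by (rule hedging_price_mono)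

lemma Ibar_mono: "(\<And>S. S \<in> \<S> \<Longrightarrow> f S \<le> g S) \<Longrightarrow> Ibar \<S> f \<le> Ibar \<S> g"
  unfolding Ibar_eq_hedging_price by (rule hedging_price_mono)

lemma sigmabar_add: "sigmabar \<S> (\<lambda>S. f S + g S) \<le> sigmabar \<S> f + sigmabar \<S> g"
  unfolding sigmabar_eq_hedging_price by (rule hedging_price_add) (simp_all add: gen_add_portfolio)

lemma Ibar_add: "Ibar \<S> (\<lambda>S. f S + g S) \<le> Ibar \<S> f + Ibar \<S> g"
  unfolding Ibar_eq_hedging_price
  by (rule hedging_price_add) (simp_all add: gen_add_pos_gen_portfolio pos_gen_portfolio_gen)

lemma sigmabar_le_Ibar: "sigmabar \<S> f \<le> Ibar \<S> f"
  unfolding sigmabar_def Ibar_def pos_gen_portfolio_def by (rule Inf_superset_mono) blast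

lemma Ibar_nonneg: "LOP \<S> \<Longrightarrow> 0 \<le> Ibar \<S> f"
  unfolding Ibar_eq_hedging_price by (rule hedging_price_greatest) (rule endowment_pos_gen_nonneg)

lemma sigmabar_cmult_le:
  assumes "0 < c"
  shows "sigmabar \<S> (\<lambda>S. ereal c * f S) \<le> ereal c * sigmabar \<S> f"
proof -
  have "sigmabar \<S> (\<lambda>S. ereal c * f S) / ereal c \<le> sigmabar \<S> f"
    unfolding sigmabar_eq_hedging_price
  proof (rule hedging_price_greatest)
    fix P assume P: "gen_portfolio \<S> P" "superhedges \<S> f P"
    have "superhedges \<S> (\<lambda>S. ereal c * f S) (gen_scale c P)"
      using P assms
      by (auto simp: superhedges_def gen_terminal_gen_scale intro: ereal_mult_left_mono)
    then have "hedging_price (gen_portfolio \<S>) \<S> (\<lambda>S. ereal c * f S) \<le> endowment (gen_scale c P)"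
      using assms P(1) by (intro hedging_price_le gen_scale_portfolio) simp_all
    also have "\<dots> = ereal c * endowment P"
      using assms P(1) by (simp add: endowment_gen_scale)
    finally show "hedging_price (gen_portfolio \<S>) \<S> (\<lambda>S. ereal c * f S) / ereal c \<le> endowment P"
      using assms by (simp add: ereal_divide_le_pos)
  qed
  then show ?thesis using assms by (simp add: ereal_divide_le_pos)
qed

lemma sigmabar_cmult:
  assumes "0 < c"
  shows "sigmabar \<S> (\<lambda>S. ereal c * f S) = ereal c * sigmabar \<S> f"
proof (rule antisym)
  show "sigmabar \<S> (\<lambda>S. ereal c * f S) \<le> ereal c * sigmabar \<S> f"
    using assms by (rule sigmabar_cmult_le)
  have "sigmabar \<S> (\<lambda>S. ereal (1 / c) * (ereal c * f S)) \<le>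
        ereal (1 / c) * sigmabar \<S> (\<lambda>S. ereal c * f S)"
    using assms by (intro sigmabar_cmult_le) simp
  then have "sigmabar \<S> f \<le> sigmabar \<S> (\<lambda>S. ereal c * f S) / ereal c"
    using assms by (simp add: mult.assoc[symmetric] divide_ereal_def mult.commute inverse_eq_divide)
  then show "ereal c * sigmabar \<S> f \<le> sigmabar \<S> (\<lambda>S. ereal c * f S)"
    using assms by (simp add: ereal_le_divide_pos)
qed

section \<open>Consequences of condition (K)\<close>

lemma condK_simple:
  assumes "LOP \<S>" and "condK \<S>" and "simple_portfolio \<S> p"
  shows "ereal (pV p) + Ibar \<S> (\<lambda>S. ereal (max (- terminal p S) 0))
           \<le> Ibar \<S> (\<lambda>S. ereal (max (terminal p S) 0))"
proof -
  have "in_E \<S> (\<lambda>S. terminal p S)" using assms(3) unfolding in_E_def by blast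
  with assms(2) have "ereal (Ifun \<S> (\<lambda>S. terminal p S)) + Ibar \<S> (\<lambda>S. ereal (max (- terminal p S) 0))
           \<le> Ibar \<S> (\<lambda>S. ereal (max (terminal p S) 0))"
    unfolding condK_def by blast
  then show ?thesis using Ifun_terminal[OF assms(1,3)] by simp
qed

lemma Ibar_pos_part_le:
  assumes "LOP \<S>" and "condK \<S>" and "simple_portfolio \<S> p"
  shows "Ibar \<S> (\<lambda>S. ereal (max (terminal p S) 0))
           \<le> ereal (pV p) + Ibar \<S> (\<lambda>S. ereal (max (- terminal p S) 0))"
proof -
  have "ereal (- pV p) + Ibar \<S> (\<lambda>S. ereal (max (terminal p S) 0))
          \<le> Ibar \<S> (\<lambda>S. ereal (max (- terminal p S) 0))"
    using condK_simple[OF assms(1,2) simple_scale_portfolio[OF assms(3), of "-1"]]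
    by (simp add: terminal_scale_portfolio)
  then show ?thesis
    using Ibar_nonneg[OF assms(1), of "\<lambda>S. ereal (max (terminal p S) 0)"]
    by (cases "Ibar \<S> (\<lambda>S. ereal (max (terminal p S) 0))";
        cases "Ibar \<S> (\<lambda>S. ereal (max (- terminal p S) 0))") auto
qed

lemma endowment_ge_of_superhedges_terminal:
  assumes "LOP \<S>" and "condK \<S>" and P: "gen_portfolio \<S> P" and p: "simple_portfolio \<S> p"
    and hedge: "superhedges \<S> (\<lambda>S. ereal (terminal p S)) P"
  shows "ereal (pV p) \<le> endowment P"
proof -
  define q where "q = add_portfolio p (scale_portfolio (-1) (P 0))"
  have q: "simple_portfolio \<S> q"
    unfolding q_def using p gen_portfolio_simple[OF P] by (intro simple_add_portfolio simple_scale_portfolio)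
  have "ereal (pV p - pV (P 0)) = ereal (pV q)" by (simp add: q_def)
  also have "\<dots> \<le> Ibar \<S> (\<lambda>S. ereal (max (terminal q S) 0))"
    using condK_simple[OF assms(1,2) q] Ibar_nonneg[OF assms(1)]
    by (meson add_increasing2 order.trans order_refl)
  also have "\<dots> \<le> endowment (gen_tail P 0)"
  proof (rule Ibar_le[OF gen_tail_pos_gen_portfolio[OF P]])
    show "superhedges \<S> (\<lambda>S. ereal (max (terminal q S) 0)) (gen_tail P 0)"
      unfolding superhedges_def
    proof
      fix S assume S: "S \<in> \<S>"
      have "ereal (terminal p S) \<le> ereal (terminal (P 0) S) + (\<Sum>m. ereal (terminal (P (Suc m)) S))"
        using hedge S by (simp add: superhedges_def gen_terminal_def)
      then show "ereal (max (terminal q S) 0) \<le> gen_terminal (gen_tail P 0) S"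
        using gen_terminal_nonneg_tail[OF P S]
        by (cases "\<Sum>m. ereal (terminal (P (Suc m)) S)")
           (auto simp: q_def terminal_add_portfolio terminal_scale_portfolio gen_terminal_gen_tail)
    qed
  qed
  also have "\<dots> = (\<Sum>m. ereal (pV (P (Suc m))))" by (simp add: endowment_gen_tail)
  finally show ?thesis
    unfolding endowment_def by (cases "\<Sum>m. ereal (pV (P (Suc m)))") auto
qed

lemma sigmabar_terminal:
  assumes "LOP \<S>" and "condK \<S>" and p: "simple_portfolio \<S> p"
    and f: "\<And>S. S \<in> \<S> \<Longrightarrow> f S = terminal p S"
  shows "sigmabar \<S> (\<lambda>S. ereal (f S)) = ereal (pV p)"
proof (rule antisym)
  show "sigmabar \<S> (\<lambda>S. ereal (f S)) \<le> ereal (pV p)"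
    using sigmabar_le[OF gen_single_portfolio[OF p], of "\<lambda>S. ereal (f S)"] f
    by (simp add: superhedges_def gen_terminal_gen_single endowment_gen_single)
  have "superhedges \<S> (\<lambda>S. ereal (f S)) P = superhedges \<S> (\<lambda>S. ereal (terminal p S)) P" for P
    using f by (simp add: superhedges_def)
  then show "ereal (pV p) \<le> sigmabar \<S> (\<lambda>S. ereal (f S))"
    unfolding sigmabar_eq_hedging_price
    using endowment_ge_of_superhedges_terminal[OF assms(1,2) _ p]
    by (intro hedging_price_greatest) simp
qed

text \<open>Split \<open>P\<close> into a simple head \<open>k\<close> and a positive tail \<open>R\<close> cheaper than \<open>e\<close>. Then
  \<open>k\<^sup>- \<le> R\<close>, and (K) prices \<open>k\<^sup>+\<close> at most at \<open>pV k + Ibar k\<^sup>-\<close>.\<close>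
lemma Ibar_gen_terminal_le:
  assumes "LOP \<S>" and "condK \<S>" and P: "gen_portfolio \<S> P"
    and nonneg: "\<And>S. S \<in> \<S> \<Longrightarrow> 0 \<le> gen_terminal P S" and "endowment P \<noteq> \<infinity>"
  shows "Ibar \<S> (gen_terminal P) \<le> endowment P"
proof (rule ereal_le_epsilon2)
  fix e :: real assume "0 < e"
  then obtain N where small: "endowment (gen_tail P N) < ereal e"
    using endowment_gen_tail_small[OF P assms(5)] by blast
  define k where "k = gen_partial_sum P N"
  define R where "R = gen_tail P N"
  have k: "simple_portfolio \<S> k" unfolding k_def by (rule simple_gen_partial_sum[OF P])
  have R: "pos_gen_portfolio \<S> R" unfolding R_def by (rule gen_tail_pos_gen_portfolio[OF P])
  have split: "gen_terminal P S = ereal (terminal k S) + gen_terminal R S" if "S \<in> \<S>" for S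
    unfolding k_def R_def by (rule gen_terminal_split[OF P that])
  have "Ibar \<S> (\<lambda>S. ereal (max (- terminal k S) 0)) \<le> endowment R"
  proof (rule Ibar_le[OF R])
    show "superhedges \<S> (\<lambda>S. ereal (max (- terminal k S) 0)) R"
      unfolding superhedges_def
    proof
      fix S assume "S \<in> \<S>"
      then show "ereal (max (- terminal k S) 0) \<le> gen_terminal R S"
        using nonneg split gen_terminal_pos_gen_nonneg[OF R]
        by (cases "gen_terminal R S") fastforce+
    qed
  qed
  then have pos_part: "Ibar \<S> (\<lambda>S. ereal (max (terminal k S) 0)) \<le> ereal (pV k) + endowment R"
    using Ibar_pos_part_le[OF assms(1,2) k] by (meson add_left_mono order.trans)
  have "Ibar \<S> (gen_terminal P) \<le> Ibar \<S> (\<lambda>S. ereal (max (terminal k S) 0) + gen_terminal R S)"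
    by (rule Ibar_mono) (simp add: split add_right_mono)
  also have "\<dots> \<le> Ibar \<S> (\<lambda>S. ereal (max (terminal k S) 0)) + Ibar \<S> (gen_terminal R)"
    by (rule Ibar_add)
  also have "\<dots> \<le> (ereal (pV k) + endowment R) + endowment R"
    using pos_part Ibar_le[OF R, of "gen_terminal R"] by (intro add_mono) (simp_all add: superhedges_def)
  also have "\<dots> = endowment P + endowment R"
    using endowment_split[OF P, of N] by (simp add: k_def R_def)
  also have "\<dots> \<le> endowment P + ereal e"
    using small by (simp add: R_def add_left_mono)
  finally show "Ibar \<S> (gen_terminal P) \<le> endowment P + ereal e" .
qed

section \<open>Countable subadditivity\<close>

lemma suminf_ereal_prod_decode:
  fixes a :: "nat \<times> nat \<Rightarrow> ereal"
  assumes "\<And>x. 0 \<le> a x"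
  shows "(\<Sum>i. a (prod_decode i)) = (\<Sum>k. \<Sum>m. a (k, m))"
proof -
  define b where "b x = e2ennreal (a x)" for x
  have a: "a x = enn2ereal (b x)" for x
    using assms by (simp add: b_def enn2ereal_e2ennreal)
  have "(\<Sum>i. b (prod_decode i)) = (\<Sum>k. \<Sum>m. b (k, m))"
    by (rule suminf_ennreal_2dimen) simp
  then show ?thesis unfolding a suminf_enn2ereal by simp
qed

lemma suminf_ereal_halves: "(\<Sum>k. ereal (e * (1/2) ^ Suc k)) = ereal e"
proof -
  have "(\<lambda>k. e * (1/2::real) ^ Suc k) sums (e * 1)"
    by (rule sums_mult) (rule power_half_series)
  then show ?thesis by (simp add: sums_suminf_ereal)
qed

text \<open>The initial components \<open>P k 0\<close> are dropped: for positive generalized portfolios they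
  carry no wealth.\<close>
definition gen_merge :: "(nat \<Rightarrow> nat \<Rightarrow> portfolio) \<Rightarrow> nat \<Rightarrow> portfolio" where
  "gen_merge P n = (case n of 0 \<Rightarrow> const_portfolio 0
     | Suc i \<Rightarrow> P (fst (prod_decode i)) (Suc (snd (prod_decode i))))"

lemma gen_merge_pos_gen_portfolio:
  assumes "\<And>k. pos_gen_portfolio \<S> (P k)"
  shows "pos_gen_portfolio \<S> (gen_merge P)"
proof (rule pos_gen_portfolioI)
  have "simple_portfolio \<S> (gen_merge P m) \<and> (1 \<le> m \<longrightarrow> positive_portfolio \<S> (gen_merge P m))" for m
    using assms by (cases m) (auto simp: gen_merge_def simple_const_portfolio pos_gen_portfolio_def gen_portfolio_def)
  then show "gen_portfolio \<S> (gen_merge P)" by (simp add: gen_portfolio_def)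
qed (simp add: gen_merge_def)

lemma endowment_gen_merge:
  assumes "LOP \<S>" and "\<And>k. pos_gen_portfolio \<S> (P k)"
  shows "endowment (gen_merge P) = (\<Sum>k. endowment (P k))"
proof -
  have "endowment (gen_merge P) = (\<Sum>i. ereal (pV (gen_merge P (Suc i))))"
    by (rule endowment_pos_gen[OF assms(1) gen_merge_pos_gen_portfolio[OF assms(2)]])
  also have "\<dots> = (\<Sum>k. \<Sum>m. ereal (pV (P k (Suc m))))"
    using suminf_ereal_prod_decode[of "\<lambda>(k, m). ereal (pV (P k (Suc m)))"]
      gen_portfolio_pV_nonneg[OF pos_gen_portfolio_gen[OF assms(2)]]
    by (simp add: gen_merge_def case_prod_beta)
  also have "\<dots> = (\<Sum>k. endowment (P k))"
    by (simp add: endowment_pos_gen[OF assms(1,2)])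
  finally show ?thesis .
qed

lemma gen_terminal_gen_merge:
  assumes "\<And>k. pos_gen_portfolio \<S> (P k)" and "S \<in> \<S>"
  shows "gen_terminal (gen_merge P) S = (\<Sum>k. gen_terminal (P k) S)"
proof -
  have "gen_terminal (gen_merge P) S = (\<Sum>i. ereal (terminal (gen_merge P (Suc i)) S))"
    by (rule gen_terminal_pos_gen[OF gen_merge_pos_gen_portfolio[OF assms(1)] assms(2)])
  also have "\<dots> = (\<Sum>k. \<Sum>m. ereal (terminal (P k (Suc m)) S))"
    using suminf_ereal_prod_decode[of "\<lambda>(k, m). ereal (terminal (P k (Suc m)) S)"]
      gen_portfolio_terminal_nonneg[OF pos_gen_portfolio_gen[OF assms(1)] assms(2)]
    by (simp add: gen_merge_def case_prod_beta)
  also have "\<dots> = (\<Sum>k. gen_terminal (P k) S)"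
    by (simp add: gen_terminal_pos_gen[OF assms])
  finally show ?thesis .
qed

lemma Ibar_suminf_le:
  assumes "LOP \<S>" and "\<And>k S. 0 \<le> f k S"
  shows "Ibar \<S> (\<lambda>S. \<Sum>k. f k S) \<le> (\<Sum>k. Ibar \<S> (f k))"
proof (cases "(\<Sum>k. Ibar \<S> (f k)) = \<infinity>")
  case False
  have Ibar_fin: "Ibar \<S> (f k) \<noteq> \<infinity>" for k
    using suminf_PInfty[OF Ibar_nonneg[OF assms(1)] False] .
  show ?thesis
  proof (rule ereal_le_epsilon2)
    fix e :: real assume "0 < e"
    let ?\<delta> = "\<lambda>k. ereal (e * (1/2) ^ Suc k)"
    have "\<exists>P. pos_gen_portfolio \<S> P \<and> superhedges \<S> (f k) P \<and> endowment P < Ibar \<S> (f k) + ?\<delta> k"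
      for k
      unfolding Ibar_eq_hedging_price hedging_price_less_iff[symmetric]
      using Ibar_fin[of k] Ibar_nonneg[OF assms(1), of "f k"] \<open>0 < e\<close>
      by (cases "Ibar \<S> (f k)") (auto simp: Ibar_eq_hedging_price)
    then obtain P where P: "\<And>k. pos_gen_portfolio \<S> (P k)" "\<And>k. superhedges \<S> (f k) (P k)"
      and cheap: "\<And>k. endowment (P k) < Ibar \<S> (f k) + ?\<delta> k"
      by metis
    have "superhedges \<S> (\<lambda>S. \<Sum>k. f k S) (gen_merge P)"
      using P(2) assms(2)
      by (auto simp: superhedges_def gen_terminal_gen_merge[OF P(1)] intro!: suminf_le_pos)
    then have "Ibar \<S> (\<lambda>S. \<Sum>k. f k S) \<le> (\<Sum>k. endowment (P k))"
      using Ibar_le[OF gen_merge_pos_gen_portfolio[OF P(1)]] endowment_gen_merge[OF assms(1) P(1)]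
      by simp
    also have "\<dots> \<le> (\<Sum>k. Ibar \<S> (f k) + ?\<delta> k)"
      using cheap endowment_pos_gen_nonneg[OF assms(1) P(1)]
      by (intro suminf_le_pos) (auto intro: less_imp_le)
    also have "\<dots> = (\<Sum>k. Ibar \<S> (f k)) + (\<Sum>k. ?\<delta> k)"
      using Ibar_nonneg[OF assms(1)] \<open>0 < e\<close> by (intro suminf_add_ereal) auto
    also have "\<dots> = (\<Sum>k. Ibar \<S> (f k)) + ereal e"
      by (simp only: suminf_ereal_halves)
    finally show "Ibar \<S> (\<lambda>S. \<Sum>k. f k S) \<le> (\<Sum>k. Ibar \<S> (f k)) + ereal e" .
  qed
qed simp

section \<open>Null sets and strict positivity\<close>

lemma suminf_ereal_const_pos: "0 < (c::ereal) \<Longrightarrow> (\<Sum>k::nat. c) = \<infinity>"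
proof (cases c)
  case (real r)
  assume "0 < c"
  show ?thesis
  proof (rule ccontr)
    assume "(\<Sum>k::nat. c) \<noteq> \<infinity>"
    then have "summable (\<lambda>k::nat. r)" using real \<open>0 < c\<close> by (intro summable_ereal) auto
    then have "(\<lambda>k::nat. r) \<longlonglongrightarrow> 0" by (rule summable_LIMSEQ_zero)
    then show False using real \<open>0 < c\<close> by (simp add: LIMSEQ_const_iff)
  qed
qed auto

lemma null_set_pos_of_Ibar_eq_0:
  assumes "LOP \<S>" and nonneg: "\<And>S. 0 \<le> f S" and "Ibar \<S> f = 0"
  shows "null_set \<S> {S \<in> \<S>. 0 < f S}"
proof -
  have "Ibar \<S> (\<lambda>S. ereal (indicator {S \<in> \<S>. 0 < f S} S)) \<le> Ibar \<S> (\<lambda>S. \<Sum>k::nat. f S)"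
  proof (rule Ibar_mono)
    fix S
    show "ereal (indicator {S \<in> \<S>. 0 < f S} S) \<le> (\<Sum>k::nat. f S)"
      using nonneg[of S] suminf_0_le[of "\<lambda>k::nat. f S"] suminf_ereal_const_pos[of "f S"]
      by (cases "0 < f S") (auto simp: indicator_def)
  qed
  also have "\<dots> \<le> (\<Sum>k::nat. Ibar \<S> f)"
    using assms(1) nonneg by (rule Ibar_suminf_le)
  also have "\<dots> = 0" using assms(3) by simp
  finally show ?thesis
    using Ibar_nonneg[OF assms(1)] by (auto simp: null_set_def intro: antisym)
qed

lemma Ibar_infinity_on_null_set:
  assumes "LOP \<S>" and "null_set \<S> A"
  shows "Ibar \<S> (\<lambda>S. if S \<in> A then \<infinity> else 0) = 0"
proof -
  have "Ibar \<S> (\<lambda>S. if S \<in> A then \<infinity> else 0) \<le> Ibar \<S> (\<lambda>S. \<Sum>k::nat. ereal (indicator A S))"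
    by (rule Ibar_mono) (simp add: suminf_ereal_const_pos zero_ereal_def[symmetric])
  also have "\<dots> \<le> (\<Sum>k::nat. Ibar \<S> (\<lambda>S. ereal (indicator A S)))"
    using assms(1) by (rule Ibar_suminf_le) simp
  also have "\<dots> = 0" using assms(2) by (simp add: null_set_def)
  finally show ?thesis using Ibar_nonneg[OF assms(1)] by (rule antisym)
qed

lemma null_set_Un:
  assumes "LOP \<S>" and "null_set \<S> A" and "null_set \<S> B"
  shows "null_set \<S> (A \<union> B)"
proof -
  have "Ibar \<S> (\<lambda>S. ereal (indicator (A \<union> B) S))
          \<le> Ibar \<S> (\<lambda>S. ereal (indicator A S) + ereal (indicator B S))"
    by (rule Ibar_mono) (simp add: indicator_def)
  also have "\<dots> \<le> Ibar \<S> (\<lambda>S. ereal (indicator A S)) + Ibar \<S> (\<lambda>S. ereal (indicator B S))"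
    by (rule Ibar_add)
  finally show ?thesis
    using assms Ibar_nonneg[OF assms(1)] by (auto simp: null_set_def intro: antisym)
qed

lemma ae_mono: "ae \<S> P \<Longrightarrow> (\<And>S. S \<in> \<S> \<Longrightarrow> P S \<Longrightarrow> Q S) \<Longrightarrow> ae \<S> Q"
  unfolding ae_def by blast

text \<open>The hedge for \<open>h\<close> is completed by a cheap positive hedge of \<open>\<infinity>\<close> on the null set, which
  makes its terminal wealth nonnegative everywhere.\<close>
lemma Ibar_pos_part_le_sigmabar:
  assumes "LOP \<S>" and "condK \<S>" and "null_set \<S> A" and "\<And>S. S \<in> \<S> - A \<Longrightarrow> 0 \<le> h S"
  shows "Ibar \<S> (\<lambda>S. ereal (max (h S) 0)) \<le> sigmabar \<S> (\<lambda>S. ereal (h S))"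
  unfolding sigmabar_eq_hedging_price
proof (rule hedging_price_greatest)
  fix P assume P: "gen_portfolio \<S> P" "superhedges \<S> (\<lambda>S. ereal (h S)) P"
  show "Ibar \<S> (\<lambda>S. ereal (max (h S) 0)) \<le> endowment P"
  proof (cases "endowment P = \<infinity>")
    case False
    show ?thesis
    proof (rule ereal_le_epsilon2)
      fix e :: real assume "0 < e"
      then have "Ibar \<S> (\<lambda>S. if S \<in> A then \<infinity> else 0) < ereal e"
        by (simp add: Ibar_infinity_on_null_set[OF assms(1,3)])
      then obtain Q where Q: "pos_gen_portfolio \<S> Q"
          "superhedges \<S> (\<lambda>S. if S \<in> A then \<infinity> else 0) Q" "endowment Q < ereal e"
        unfolding Ibar_eq_hedging_price hedging_price_less_iff by blast
      have Q': "gen_portfolio \<S> Q" using Q(1) by (rule pos_gen_portfolio_gen)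
      have PQ: "gen_portfolio \<S> (gen_add P Q)" using P(1) Q' by (rule gen_add_portfolio)
      have endow: "endowment (gen_add P Q) = endowment P + endowment Q"
        using P(1) Q' by (rule endowment_gen_add)
      have hedge: "ereal (max (h S) 0) \<le> gen_terminal (gen_add P Q) S" if "S \<in> \<S>" for S
      proof (cases "S \<in> A")
        case True
        have "(if S \<in> A then \<infinity> else 0) \<le> gen_terminal Q S"
          using Q(2) that unfolding superhedges_def by blast
        with True have "gen_terminal Q S = \<infinity>" by simp
        then show ?thesis
          using gen_terminal_gen_add[OF P(1) Q' that] gen_terminal_not_MInf[OF P(1) that] by simp
      next
        case False
        then have "ereal (max (h S) 0) \<le> gen_terminal P S"
          using assms(4) P(2) that by (simp add: superhedges_def)
        also have "\<dots> \<le> gen_terminal P S + gen_terminal Q S"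
          using gen_terminal_pos_gen_nonneg[OF Q(1) that] by (rule add_increasing2) simp
        finally show ?thesis using gen_terminal_gen_add[OF P(1) Q' that] by simp
      qed
      have "Ibar \<S> (\<lambda>S. ereal (max (h S) 0)) \<le> Ibar \<S> (gen_terminal (gen_add P Q))"
        using hedge by (rule Ibar_mono)
      also have "\<dots> \<le> endowment (gen_add P Q)"
      proof (rule Ibar_gen_terminal_le[OF assms(1,2) PQ])
        show "0 \<le> gen_terminal (gen_add P Q) S" if "S \<in> \<S>" for S
          using order_trans[OF _ hedge[OF that]] by (simp add: le_max_iff_disj)
        show "endowment (gen_add P Q) \<noteq> \<infinity>"
          using False Q(3) by (auto simp: endow)
      qed
      also have "\<dots> \<le> endowment P + ereal e"
        using Q(3) by (simp add: endow add_left_mono less_imp_le)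
      finally show "Ibar \<S> (\<lambda>S. ereal (max (h S) 0)) \<le> endowment P + ereal e" .
    qed
  qed simp
qed

lemma ae_eq_0_of_sigmabar_le_0:
  assumes "LOP \<S>" and "condK \<S>" and "sigmabar \<S> (\<lambda>S. ereal (h S)) \<le> 0"
    and "ae \<S> (\<lambda>S. 0 \<le> h S)"
  shows "ae \<S> (\<lambda>S. h S = 0)"
proof -
  obtain A where A: "null_set \<S> A" "\<And>S. S \<in> \<S> - A \<Longrightarrow> 0 \<le> h S"
    using assms(4) unfolding ae_def by blast
  have "Ibar \<S> (\<lambda>S. ereal (max (h S) 0)) \<le> 0"
    using Ibar_pos_part_le_sigmabar[OF assms(1,2) A] assms(3) by (rule order_trans)
  then have "Ibar \<S> (\<lambda>S. ereal (max (h S) 0)) = 0"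
    using Ibar_nonneg[OF assms(1)] by (rule antisym)
  then have "null_set \<S> {S \<in> \<S>. 0 < ereal (max (h S) 0)}"
    by (intro null_set_pos_of_Ibar_eq_0[OF assms(1)]) (simp_all add: le_max_iff_disj)
  then have "null_set \<S> ({S \<in> \<S>. 0 < ereal (max (h S) 0)} \<union> A)"
    using assms(1) A(1) by (intro null_set_Un)
  moreover have "h S = 0" if "S \<in> \<S> - ({S \<in> \<S>. 0 < ereal (max (h S) 0)} \<union> A)" for S
    using that A(2)[of S] by auto
  ultimately show ?thesis unfolding ae_def by blast
qed

section \<open>The integral\<close>

lemma L1K_iff:
  "f \<in> L1K \<S> \<longleftrightarrow>
     sigmabar \<S> (\<lambda>S. ereal (f S)) = ereal (intK \<S> f) \<and>
     sigmabar \<S> (\<lambda>S. ereal (- f S)) = ereal (- intK \<S> f)"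
proof -
  have "(\<lambda>S. - ereal (f S)) = (\<lambda>S. ereal (- f S))" by simp
  then show ?thesis
    unfolding L1K_def sigmaunder_def intK_def mem_Collect_eq
    by (cases "sigmabar \<S> (\<lambda>S. ereal (f S))"; cases "sigmabar \<S> (\<lambda>S. ereal (- f S))") auto
qed

lemma L1K_intro:
  assumes "sigmabar \<S> (\<lambda>S. ereal (f S)) = ereal a" and "sigmabar \<S> (\<lambda>S. ereal (- f S)) = ereal (- a)"
  shows "f \<in> L1K \<S>" and "intK \<S> f = a"
  using assms by (simp_all add: L1K_iff intK_def)

lemma sigmabar_const: "LOP \<S> \<Longrightarrow> condK \<S> \<Longrightarrow> sigmabar \<S> (\<lambda>S. ereal c) = ereal c"
  using sigmabar_terminal[OF _ _ simple_const_portfolio, of \<S> "\<lambda>S. c" c] by simp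

text \<open>Subadditivity applied to \<open>f + (- f) = 0\<close> gives \<open>sigmabar f + sigmabar (- f) \<ge> 0\<close>,
  so both bounds are attained.\<close>
lemma L1K_squeeze:
  assumes "LOP \<S>" and "condK \<S>"
    and le: "sigmabar \<S> (\<lambda>S. ereal (f S)) \<le> ereal a" "sigmabar \<S> (\<lambda>S. ereal (- f S)) \<le> ereal (- a)"
  shows "f \<in> L1K \<S>" and "intK \<S> f = a"
proof -
  have "0 = sigmabar \<S> (\<lambda>S. ereal (f S) + ereal (- f S))"
    using sigmabar_const[OF assms(1,2), of 0] by (simp add: zero_ereal_def)
  also have "\<dots> \<le> sigmabar \<S> (\<lambda>S. ereal (f S)) + sigmabar \<S> (\<lambda>S. ereal (- f S))"
    by (rule sigmabar_add)
  finally have "sigmabar \<S> (\<lambda>S. ereal (f S)) = ereal a \<and> sigmabar \<S> (\<lambda>S. ereal (- f S)) = ereal (- a)"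
    using le by (cases "sigmabar \<S> (\<lambda>S. ereal (f S))"; cases "sigmabar \<S> (\<lambda>S. ereal (- f S))") auto
  then show "f \<in> L1K \<S>" "intK \<S> f = a" by (simp_all add: L1K_intro)
qed

lemma in_E_L1K:
  assumes "LOP \<S>" and "condK \<S>" and "in_E \<S> f"
  shows "f \<in> L1K \<S>" and "intK \<S> f = Ifun \<S> f"
proof -
  obtain p where p: "simple_portfolio \<S> p" "\<And>S. S \<in> \<S> \<Longrightarrow> f S = terminal p S"
    using assms(3) unfolding in_E_def by blast
  have "sigmabar \<S> (\<lambda>S. ereal (f S)) = ereal (pV p)"
    by (rule sigmabar_terminal[OF assms(1,2) p])
  moreover have "sigmabar \<S> (\<lambda>S. ereal (- f S)) = ereal (pV (scale_portfolio (-1) p))"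
    by (rule sigmabar_terminal[OF assms(1,2) simple_scale_portfolio[OF p(1)]])
       (simp add: terminal_scale_portfolio p(2))
  ultimately show "f \<in> L1K \<S>" "intK \<S> f = Ifun \<S> f"
    using L1K_intro[of \<S> f "pV p"] Ifun_terminal[OF assms(1) p] by simp_all
qed

lemma L1K_const:
  assumes "LOP \<S>" and "condK \<S>"
  shows "(\<lambda>S. c) \<in> L1K \<S>" and "intK \<S> (\<lambda>S. c) = c"
proof -
  have "in_E \<S> (\<lambda>S. c)"
    unfolding in_E_def using simple_const_portfolio by fastforce
  then show "(\<lambda>S. c) \<in> L1K \<S>" "intK \<S> (\<lambda>S. c) = c"
    using in_E_L1K[OF assms] Ifun_terminal[OF assms(1) simple_const_portfolio, of "\<lambda>S. c"] by simp_all
qed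

lemma L1K_add:
  assumes "LOP \<S>" and "condK \<S>" and f: "f \<in> L1K \<S>" and g: "g \<in> L1K \<S>"
  shows "(\<lambda>S. f S + g S) \<in> L1K \<S>" and "intK \<S> (\<lambda>S. f S + g S) = intK \<S> f + intK \<S> g"
proof -
  have "sigmabar \<S> (\<lambda>S. ereal (f S + g S)) \<le> ereal (intK \<S> f + intK \<S> g)"
    using sigmabar_add[of \<S> "\<lambda>S. ereal (f S)" "\<lambda>S. ereal (g S)"] f g by (simp add: L1K_iff)
  moreover have "sigmabar \<S> (\<lambda>S. ereal (- (f S + g S))) \<le> ereal (- (intK \<S> f + intK \<S> g))"
    using sigmabar_add[of \<S> "\<lambda>S. ereal (- f S)" "\<lambda>S. ereal (- g S)"] f g by (simp add: L1K_iff)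
  ultimately show "(\<lambda>S. f S + g S) \<in> L1K \<S>" "intK \<S> (\<lambda>S. f S + g S) = intK \<S> f + intK \<S> g"
    using L1K_squeeze[OF assms(1,2)] by simp_all
qed

lemma L1K_cmult:
  assumes "LOP \<S>" and "condK \<S>" and f: "f \<in> L1K \<S>"
  shows "(\<lambda>S. c * f S) \<in> L1K \<S>" and "intK \<S> (\<lambda>S. c * f S) = c * intK \<S> f"
proof -
  have "sigmabar \<S> (\<lambda>S. ereal (c * f S)) = ereal (c * intK \<S> f) \<and>
        sigmabar \<S> (\<lambda>S. ereal (- (c * f S))) = ereal (- (c * intK \<S> f))"
  proof (cases c "0::real" rule: linorder_cases)
    case less
    then show ?thesis
      using sigmabar_cmult[of "- c" \<S> "\<lambda>S. ereal (f S)"] sigmabar_cmult[of "- c" \<S> "\<lambda>S. ereal (- f S)"]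
        f by (simp add: L1K_iff)
  next
    case equal
    then show ?thesis using sigmabar_const[OF assms(1,2), of 0] by simp
  next
    case greater
    then show ?thesis
      using sigmabar_cmult[of c \<S> "\<lambda>S. ereal (f S)"] sigmabar_cmult[of c \<S> "\<lambda>S. ereal (- f S)"]
        f by (simp add: L1K_iff)
  qed
  then show "(\<lambda>S. c * f S) \<in> L1K \<S>" "intK \<S> (\<lambda>S. c * f S) = c * intK \<S> f"
    by (simp_all add: L1K_intro)
qed

lemma intK_nonneg:
  assumes "LOP \<S>" and "condK \<S>" and "f \<in> L1K \<S>" and "\<And>S. S \<in> \<S> \<Longrightarrow> 0 \<le> f S"
  shows "0 \<le> intK \<S> f"
proof -
  have "ereal 0 \<le> sigmabar \<S> (\<lambda>S. ereal (f S))"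
    using sigmabar_mono[of \<S> "\<lambda>S. ereal 0" "\<lambda>S. ereal (f S)"] assms(4)
    by (simp add: sigmabar_const[OF assms(1,2)])
  then show ?thesis using assms(3) by (simp add: L1K_iff)
qed

lemma sigmabar_le_add_snorm:
  "sigmabar \<S> (\<lambda>S. ereal (f S)) \<le> sigmabar \<S> (\<lambda>S. ereal (g S)) + snorm \<S> (\<lambda>S. f S - g S)"
proof -
  have "sigmabar \<S> (\<lambda>S. ereal (f S - g S)) \<le> sigmabar \<S> (\<lambda>S. ereal \<bar>f S - g S\<bar>)"
    by (rule sigmabar_mono) simp
  also have "\<dots> \<le> snorm \<S> (\<lambda>S. f S - g S)"
    unfolding snorm_def by (rule sigmabar_le_Ibar)
  finally have "sigmabar \<S> (\<lambda>S. ereal (g S)) + sigmabar \<S> (\<lambda>S. ereal (f S - g S))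
      \<le> sigmabar \<S> (\<lambda>S. ereal (g S)) + snorm \<S> (\<lambda>S. f S - g S)"
    by (rule add_left_mono)
  with sigmabar_add[of \<S> "\<lambda>S. ereal (g S)" "\<lambda>S. ereal (f S - g S)"] show ?thesis by simp
qed

lemma intK_tendsto:
  assumes f: "f \<in> L1K \<S>" and fs: "\<And>n. fs n \<in> L1K \<S>"
    and lim: "(\<lambda>n. snorm \<S> (\<lambda>S. fs n S - f S)) \<longlonglongrightarrow> 0"
  shows "(\<lambda>n. intK \<S> (fs n)) \<longlonglongrightarrow> intK \<S> f"
proof -
  let ?a = "ereal (intK \<S> f)" and ?s = "\<lambda>n. snorm \<S> (\<lambda>S. fs n S - f S)"
  have upper: "ereal (intK \<S> (fs n)) \<le> ?a + ?s n" for n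
    using sigmabar_le_add_snorm[of \<S> "fs n" f] f fs by (simp add: L1K_iff)
  have lower: "?a - ?s n \<le> ereal (intK \<S> (fs n))" for n
  proof -
    have "?a \<le> ereal (intK \<S> (fs n)) + ?s n"
      using sigmabar_le_add_snorm[of \<S> f "fs n"] f fs by (simp add: L1K_iff snorm_def abs_minus_commute)
    then show ?thesis by (cases "?s n") auto
  qed
  have "(\<lambda>n. ?a - ?s n) \<longlonglongrightarrow> ?a"
    using tendsto_diff_ereal[of ?a 0 "\<lambda>n. ?a" sequentially ?s] lim by simp
  moreover have "(\<lambda>n. ?a + ?s n) \<longlonglongrightarrow> ?a"
    using tendsto_add_ereal[of ?a 0 "\<lambda>n. ?a" sequentially ?s] lim by simp
  ultimately have "(\<lambda>n. ereal (intK \<S> (fs n))) \<longlonglongrightarrow> ?a"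
    by (rule tendsto_sandwich[rotated 2]) (simp_all add: lower upper)
  then show ?thesis by simp
qed

lemma L1K_ae_eq:
  assumes "LOP \<S>" and "condK \<S>" and f: "f \<in> L1K \<S>" and g: "g \<in> L1K \<S>"
    and "ae \<S> (\<lambda>S. g S \<le> f S)" and "intK \<S> f = intK \<S> g"
  shows "ae \<S> (\<lambda>S. f S = g S)"
proof -
  have "sigmabar \<S> (\<lambda>S. ereal (f S - g S)) \<le> ereal 0"
    using sigmabar_add[of \<S> "\<lambda>S. ereal (f S)" "\<lambda>S. ereal (- g S)"] f g assms(6)
    by (simp add: L1K_iff)
  moreover have "ae \<S> (\<lambda>S. 0 \<le> f S - g S)" using assms(5) by (rule ae_mono) simp
  ultimately have "ae \<S> (\<lambda>S. f S - g S = 0)"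
    by (intro ae_eq_0_of_sigmabar_le_0[OF assms(1,2)]) (simp_all add: zero_ereal_def[symmetric])
  then show ?thesis by (rule ae_mono) simp
qed

theorem theorem4p3:
  fixes s0 :: real and \<S> :: "traj set"
  assumes traj: "trajectory_set s0 \<S>"
    and lop: "LOP \<S>"
    and K: "condK \<S>"
  shows
    "(\<lambda>S. 0) \<in> L1K \<S>
     \<and> (\<forall>f\<in>L1K \<S>. \<forall>g\<in>L1K \<S>. (\<lambda>S. f S + g S) \<in> L1K \<S>)
     \<and> (\<forall>f\<in>L1K \<S>. \<forall>c::real. (\<lambda>S. c * f S) \<in> L1K \<S>)
     \<and> (\<forall>f. in_E \<S> f \<longrightarrow> f \<in> L1K \<S>)
     \<and> (\<forall>f\<in>L1K \<S>. \<forall>g\<in>L1K \<S>. intK \<S> (\<lambda>S. f S + g S) = intK \<S> f + intK \<S> g)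
     \<and> (\<forall>f\<in>L1K \<S>. \<forall>c::real. intK \<S> (\<lambda>S. c * f S) = c * intK \<S> f)
     \<and> (\<forall>f\<in>L1K \<S>. (\<forall>S\<in>\<S>. f S \<ge> 0) \<longrightarrow> intK \<S> f \<ge> 0)
     \<and> (\<forall>c::real. intK \<S> (\<lambda>S. c) = c)
     \<and> (\<forall>f. in_E \<S> f \<longrightarrow> intK \<S> f = Ifun \<S> f)
     \<and> (\<forall>f (fs :: nat \<Rightarrow> traj \<Rightarrow> real). f \<in> L1K \<S> \<longrightarrow> (\<forall>n. fs n \<in> L1K \<S>) \<longrightarrow>
          (\<lambda>n. snorm \<S> (\<lambda>S. fs n S - f S)) \<longlonglongrightarrow> 0 \<longrightarrow>
          (\<lambda>n. intK \<S> (fs n)) \<longlonglongrightarrow> intK \<S> f)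
     \<and> (\<forall>f\<in>L1K \<S>. \<forall>g\<in>L1K \<S>. ae \<S> (\<lambda>S. f S \<ge> g S) \<longrightarrow> intK \<S> f = intK \<S> g \<longrightarrow>
          ae \<S> (\<lambda>S. f S = g S))"
  using L1K_const[OF lop K] L1K_add[OF lop K] L1K_cmult[OF lop K] in_E_L1K[OF lop K]
    intK_nonneg[OF lop K] intK_tendsto L1K_ae_eq[OF lop K]
  by (intro conjI ballI allI impI) simp_all

end
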